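(* Let $T_{ab}$ be a rank-2 tensor. (a) The following are equivalent: $T_{ac}T_b{}^c=0$; $T_a{}^b$ is a singular null-cone preserving map; $T_{ab}=s_ak_b$ for some covector $s$ and null covector $k$. (b) The following are equivalent: $T_{ac}T_b{}^c=0$ and $T_{ca}T^c{}_b=0$; $T_a{}^b$ is a singular null-cone bi-preserving map; $T_{ab}=n_ak_b$ for null covectors $n,k$ (or $T=0$). In case (b), $T_{ab}\in\mathcal{DP}\cup-\mathcal{DP}$.
   Context: Lorentzian metric $g_{ab}$ of signature $(+,-,\dots,-)$, dimension $N\ge3$, with a time orientation; null: $v\neq0$, $v_av^a=0$. $T_a{}^b$ is null-cone preserving if $k^aT_a{}^b$ is null or zero for all null $k$; bi-preserving if moreover $T_a{}^bk_b$ is null or zero for all null $k$; singular if $\det(T_a{}^b)=0$. $\mathcal{DP}$: rank-2 tensors with $T_{ab}u^av^b\ge0$ for all causal (nonzero, $v\cdot v\ge0$) future-pointing $u,v$; $-\mathcal{DP}$ its negatives. *)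

theory Defs
  imports "HOL-Analysis.Analysis"
begin

text \<open>Algebraic setting at a point: components w.r.t. a basis indexed by the finite type 'n.
  The metric g_ab is the matrix g (g $ a $ b = g_ab), its inverse g^ab is matrix_inv g.
  Vectors (upper index) and covectors (lower index) are both elements of real^'n.
  A rank-2 tensor T_ab is a matrix T with T $ a $ b = T_ab.\<close>

definition lorentzian :: "real^'n^'n \<Rightarrow> bool" where
  "lorentzian g \<longleftrightarrow> transpose g = g \<and>
     (\<exists>P::real^'n^'n. invertible P \<and> (\<exists>i0. \<forall>i j.
        (transpose P ** g ** P) $ i $ j = (if i = j then (if i = i0 then 1 else -1) else 0)))"

definition gvec :: "real^'n^'n \<Rightarrow> real^'n \<Rightarrow> real^'n \<Rightarrow> real" where
  "gvec g u v = u \<bullet> (g *v v)"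

definition gcov :: "real^'n^'n \<Rightarrow> real^'n \<Rightarrow> real^'n \<Rightarrow> real" where
  "gcov g w z = w \<bullet> (matrix_inv g *v z)"

definition null_vec :: "real^'n^'n \<Rightarrow> real^'n \<Rightarrow> bool" where
  "null_vec g v \<longleftrightarrow> v \<noteq> 0 \<and> gvec g v v = 0"

definition null_cov :: "real^'n^'n \<Rightarrow> real^'n \<Rightarrow> bool" where
  "null_cov g w \<longleftrightarrow> w \<noteq> 0 \<and> gcov g w w = 0"

text \<open>time orientation given by a timelike vector tau: a causal vector v is future-pointing
  iff g(tau,v) > 0\<close>
definition causal_future :: "real^'n^'n \<Rightarrow> real^'n \<Rightarrow> real^'n \<Rightarrow> bool" where
  "causal_future g tau v \<longleftrightarrow> v \<noteq> 0 \<and> gvec g v v \<ge> 0 \<and> gvec g tau v > 0"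

text \<open>the mixed tensor T_a^b = T_ac g^cb\<close>
definition mixed :: "real^'n^'n \<Rightarrow> real^'n^'n \<Rightarrow> real^'n^'n" where
  "mixed g T = T ** matrix_inv g"

definition null_cone_preserving :: "real^'n^'n \<Rightarrow> real^'n^'n \<Rightarrow> bool" where
  "null_cone_preserving g T \<longleftrightarrow>
     (\<forall>k. null_vec g k \<longrightarrow> (let v = k v* mixed g T in v = 0 \<or> null_vec g v))"

definition null_cone_bi_preserving :: "real^'n^'n \<Rightarrow> real^'n^'n \<Rightarrow> bool" where
  "null_cone_bi_preserving g T \<longleftrightarrow> null_cone_preserving g T \<and>
     (\<forall>k. null_vec g k \<longrightarrow> (let w = mixed g T *v (g *v k) in w = 0 \<or> null_cov g w))"

definition singular_map :: "real^'n^'n \<Rightarrow> real^'n^'n \<Rightarrow> bool" where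
  "singular_map g T \<longleftrightarrow> det (mixed g T) = 0"

definition DP :: "real^'n^'n \<Rightarrow> real^'n \<Rightarrow> (real^'n^'n) set" where
  "DP g tau = {T. \<forall>u v. causal_future g tau u \<longrightarrow> causal_future g tau v \<longrightarrow> u \<bullet> (T *v v) \<ge> 0}"

definition outer :: "real^'n \<Rightarrow> real^'n \<Rightarrow> real^'n^'n" where
  "outer s k = (\<chi> a b. s $ a * k $ b)"

end

theory Submission
  imports Defs
begin

(* In coordinates where g = diag(1,-1,...,-1), two orthogonal null vectors are parallel, and a
   symmetric form vanishing on the null cone is a multiple of g.  T_ac T_b^c = 0 says that the rows
   of T are mutually orthogonal null covectors, so by the first fact they are all multiples of one
   null covector k: T = s (x) k.  Null-cone preservation says that T g^-1 T^t vanishes on the null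
   cone, so by the second fact T g^-1 T^t = l g, and singularity of T forces l = 0.  Applying this
   to T and its transpose makes s null as well; then T_ab u^a v^b = (n.u)(k.v), and n.u, k.v have
   constant signs on the future causal cone. *)

lemma matrix_inv_right: "invertible A \<Longrightarrow> A ** matrix_inv A = mat 1"
  and matrix_inv_left: "invertible A \<Longrightarrow> matrix_inv A ** A = mat 1"
  for A :: "'a::semiring_1^'n^'n"
  unfolding invertible_def matrix_inv_def by (metis (mono_tags, lifting) someI_ex)+

lemma invertible_matrix_inv: "invertible A \<Longrightarrow> invertible (matrix_inv A)"
  for A :: "'a::semiring_1^'n^'n"
  using matrix_inv_left matrix_inv_right invertible_def by blast

lemma matrix_inv_symmetric:
  fixes A :: "real^'n^'n"
  assumes "invertible A" "transpose A = A"
  shows "transpose (matrix_inv A) = matrix_inv A"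
proof -
  have "transpose (matrix_inv A) = transpose (matrix_inv A) ** (A ** matrix_inv A)"
    using matrix_inv_right[OF assms(1)] by simp
  also have "\<dots> = transpose (A ** matrix_inv A) ** matrix_inv A"
    by (simp add: matrix_transpose_mul assms(2) matrix_mul_assoc)
  also have "\<dots> = matrix_inv A"
    using matrix_inv_right[OF assms(1)] by simp
  finally show ?thesis .
qed

lemma invertible_mult_vec_eq_0:
  fixes P :: "real^'n^'n"
  assumes "invertible P"
  shows "P *v y = 0 \<longleftrightarrow> y = 0"
proof -
  obtain P' where "P' ** P = mat 1"
    using assms invertible_left_inverse by blast
  then have "P' *v (P *v y) = y"
    by (simp add: matrix_vector_mul_assoc)
  then show ?thesis
    by auto
qed

lemma invertible_mult_vec_surj:
  fixes P :: "real^'n^'n"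
  assumes "invertible P"
  obtains y where "x = P *v y"
  using assms by (metis bij_pointE invertible_eq_bij)

lemma quadratic_form_congruence:
  fixes P h :: "real^'n^'n"
  shows "(P *v y) \<bullet> (h *v (P *v z)) = y \<bullet> ((transpose P ** h ** P) *v z)"
  by (metis dot_lmul_matrix matrix_vector_mul_assoc vector_transpose_matrix)

lemma congruence_cancel:
  fixes P A B :: "real^'n^'n"
  assumes "invertible P" and "transpose P ** A ** P = transpose P ** B ** P"
  shows "A = B"
proof -
  obtain P' where PP': "P ** P' = mat 1" "P' ** P = mat 1"
    using assms(1) unfolding invertible_def by blast
  then have P'P: "transpose P' ** transpose P = mat 1"
    by (metis matrix_transpose_mul transpose_mat)
  have conj: "X = transpose P' ** (transpose P ** X ** P) ** P'" for X
  proof -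
    have "X = (transpose P' ** transpose P) ** X ** (P ** P')"
      by (simp add: P'P PP'(1))
    then show ?thesis
      by (simp only: matrix_mul_assoc)
  qed
  show ?thesis
    using conj[of A] conj[of B] by (simp only: assms(2))
qed

lemma matrix_mult_transpose_nth: "(A ** B ** transpose C) $ i $ j = A$i \<bullet> (B *v C$j)"
  by (simp add: matrix_matrix_mult_def matrix_vector_mult_def inner_vec_def transpose_def
      sum_distrib_left sum_distrib_right ac_simps) (subst sum.swap, simp)

lemma gvec_commute: "transpose g = g \<Longrightarrow> gvec g u v = gvec g v u"
  by (metis dot_lmul_matrix gvec_def inner_commute transpose_matrix_vector)

section \<open>Minkowski coordinates\<close>

definition minkowski_matrix :: "'n \<Rightarrow> real^'n^'n" where
  "minkowski_matrix i0 = (\<chi> i j. if i = j then (if i = i0 then 1 else -1) else 0)"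

lemma minkowski_matrix_mult_vec: "minkowski_matrix i0 *v z = (2 * z$i0) *\<^sub>R axis i0 1 - z"
  by (simp add: vec_eq_iff minkowski_matrix_def matrix_vector_mult_def axis_def
      if_distrib[of "\<lambda>x. x * _"] cong: if_cong)

lemma minkowski_form: "y \<bullet> (minkowski_matrix i0 *v z) = 2 * y$i0 * z$i0 - y \<bullet> z"
  by (simp add: minkowski_matrix_mult_vec inner_axis algebra_simps)

lemma minkowski_matrix_involution: "minkowski_matrix i0 ** minkowski_matrix i0 = mat 1"
  by (simp add: matrix_eq matrix_vector_mul_assoc[symmetric] minkowski_matrix_mult_vec
      vec_eq_iff axis_def)

lemma minkowski_null_orthogonal_parallel:
  fixes a b :: "real^'n"
  assumes "a \<bullet> (minkowski_matrix i0 *v a) = 0" "b \<bullet> (minkowski_matrix i0 *v b) = 0"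
    and "a \<bullet> (minkowski_matrix i0 *v b) = 0" and "a \<noteq> 0"
  shows "\<exists>c. b = c *\<^sub>R a"
proof -
  have aa: "a \<bullet> a = 2 * (a$i0)^2" and bb: "b \<bullet> b = 2 * (b$i0)^2" and ab: "a \<bullet> b = 2 * a$i0 * b$i0"
    using assms(1-3) by (simp_all add: minkowski_form power2_eq_square)
  define d where "d = b$i0 *\<^sub>R a - a$i0 *\<^sub>R b"
  have "d \<bullet> d = (b$i0)^2 * (a \<bullet> a) - 2 * a$i0 * b$i0 * (a \<bullet> b) + (a$i0)^2 * (b \<bullet> b)"
    by (simp add: d_def inner_diff_left inner_diff_right inner_commute power2_eq_square
        algebra_simps)
  also have "\<dots> = 0"
    using aa bb ab by (simp add: power2_eq_square algebra_simps)
  finally have eq: "b$i0 *\<^sub>R a = a$i0 *\<^sub>R b"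
    by (simp add: d_def)
  have "a$i0 \<noteq> 0"
    using aa \<open>a \<noteq> 0\<close> by auto
  then have "b = inverse (a$i0) *\<^sub>R (a$i0 *\<^sub>R b)"
    by simp
  also have "\<dots> = (inverse (a$i0) * b$i0) *\<^sub>R a"
    by (simp only: eq[symmetric] scaleR_scaleR)
  finally show ?thesis
    by blast
qed

lemma symmetric_quadratic_form_axes:
  fixes B :: "real^'n^'n" and \<alpha> \<beta> \<gamma> :: real and i j k :: 'n
  assumes "transpose B = B"
  defines "y \<equiv> \<alpha> *\<^sub>R axis i 1 + \<beta> *\<^sub>R axis j 1 + \<gamma> *\<^sub>R axis k 1"
  shows "y \<bullet> (B *v y) = \<alpha>*\<alpha>*B$i$i + \<beta>*\<beta>*B$j$j + \<gamma>*\<gamma>*B$k$k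
    + 2*\<alpha>*\<beta>*B$i$j + 2*\<alpha>*\<gamma>*B$i$k + 2*\<beta>*\<gamma>*B$j$k"
proof -
  have entry: "axis p 1 \<bullet> (B *v axis q 1) = B$p$q" for p q
    by (simp add: inner_axis' matrix_vector_mul_component inner_axis)
  have sym: "B$q$p = B$p$q" for p q
    using assms by (metis transpose_def vec_lambda_beta)
  show ?thesis
    unfolding y_def
    by (simp add: matrix_vector_right_distrib entry sym[of j i] sym[of k i] sym[of k j]
        algebra_simps)
qed

lemma minkowski_null_quadratic_form:
  fixes B :: "real^'n^'n"
  assumes sym: "transpose B = B"
    and null: "\<And>y. y \<bullet> (minkowski_matrix i0 *v y) = 0 \<Longrightarrow> y \<bullet> (B *v y) = 0"
  shows "B = B$i0$i0 *\<^sub>R minkowski_matrix i0"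
proof -
  note form = symmetric_quadratic_form_axes[OF sym]
  have axis_nth_eq: "axis p (1::real) $ q = (if q = p then 1 else 0)" for p q
    by (simp add: axis_def)
  have null_axes: "\<alpha>*\<alpha>*B$i0$i0 + \<beta>*\<beta>*B$j$j + \<gamma>*\<gamma>*B$k$k
      + 2*\<alpha>*\<beta>*B$i0$j + 2*\<alpha>*\<gamma>*B$i0$k + 2*\<beta>*\<gamma>*B$j$k = 0"
    if "j \<noteq> i0" "k \<noteq> i0" "\<alpha>*\<alpha> = \<beta>*\<beta> + \<gamma>*\<gamma> + 2*\<beta>*\<gamma>*(if j = k then 1 else 0)"
    for \<alpha> \<beta> \<gamma> j k
  proof -
    let ?y = "\<alpha> *\<^sub>R axis i0 1 + \<beta> *\<^sub>R axis j 1 + \<gamma> *\<^sub>R axis k 1"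
    have "?y \<bullet> (minkowski_matrix i0 *v ?y) = 0"
      using that by (auto simp: minkowski_form inner_axis_axis axis_nth_eq algebra_simps)
    from null[OF this] show ?thesis
      by (simp only: form)
  qed
  have time_space: "B$i0$j = 0 \<and> B$j$j = - B$i0$i0" if "j \<noteq> i0" for j
    using null_axes[OF that that, of 1 1 0] null_axes[OF that that, of 1 "-1" 0] by simp
  have space_space: "B$j$k = 0" if "j \<noteq> i0" "k \<noteq> i0" "j \<noteq> k" for j k
    using null_axes[OF that(1,2), of "sqrt 2" 1 1] time_space[OF that(1)] time_space[OF that(2)]
      that(3) by simp
  have sym_entry: "B$j$i = B$i$j" for i j
    using sym by (metis transpose_def vec_lambda_beta)
  show ?thesis
    unfolding vec_eq_iff
  proof (intro allI)
    fix i j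
    show "B$i$j = (B$i0$i0 *\<^sub>R minkowski_matrix i0)$i$j"
      using time_space[of i] time_space[of j] space_space[of i j] sym_entry[of i j]
      by (cases "i = i0"; cases "j = i0") (auto simp: minkowski_matrix_def)
  qed
qed

lemma minkowski_causal_time_product:
  fixes y z :: "real^'n"
  assumes y: "y \<bullet> y \<le> 2 * (y$i0)^2" and z: "z \<bullet> z \<le> 2 * (z$i0)^2"
  shows "0 \<le> y$i0 * z$i0 * (2 * y$i0 * z$i0 - y \<bullet> z)"
    and "y \<bullet> y < 2 * (y$i0)^2 \<Longrightarrow> z \<noteq> 0 \<Longrightarrow> 0 < y$i0 * z$i0 * (2 * y$i0 * z$i0 - y \<bullet> z)"
proof -
  have sos: "4 * (y$i0 * z$i0 * (2 * y$i0 * z$i0 - y \<bullet> z))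
      = (2 * y$i0 * z$i0 - y \<bullet> z)^2 + ((2 * y$i0 * z$i0)^2 - (y \<bullet> z)^2)"
    by (simp add: power2_eq_square algebra_simps)
  have bound: "2 * (y$i0)^2 * (2 * (z$i0)^2) = (2 * y$i0 * z$i0)^2"
    by (simp add: power2_eq_square)
  have "(y \<bullet> z)^2 \<le> (y \<bullet> y) * (z \<bullet> z)"
    by (rule Cauchy_Schwarz_ineq)
  also have "\<dots> \<le> (2 * y$i0 * z$i0)^2"
    unfolding bound[symmetric] using y z by (intro mult_mono) auto
  finally show "0 \<le> y$i0 * z$i0 * (2 * y$i0 * z$i0 - y \<bullet> z)"
    using sos by (smt (verit) zero_le_power2)
  assume y': "y \<bullet> y < 2 * (y$i0)^2" and "z \<noteq> 0"
  then have "0 < z \<bullet> z"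
    by simp
  have "(y \<bullet> z)^2 \<le> (y \<bullet> y) * (z \<bullet> z)"
    by (rule Cauchy_Schwarz_ineq)
  also have "\<dots> < 2 * (y$i0)^2 * (z \<bullet> z)"
    using y' \<open>0 < z \<bullet> z\<close> by simp
  also have "\<dots> \<le> (2 * y$i0 * z$i0)^2"
    unfolding bound[symmetric] using z by (intro mult_left_mono) auto
  finally show "0 < y$i0 * z$i0 * (2 * y$i0 * z$i0 - y \<bullet> z)"
    using sos by (smt (verit) zero_le_power2)
qed

section \<open>Lorentzian metrics\<close>

lemma lorentzian_iff_congruent_minkowski:
  "lorentzian g \<longleftrightarrow> transpose g = g \<and>
     (\<exists>(P::real^'n^'n) i0. invertible P \<and> transpose P ** g ** P = minkowski_matrix i0)"
  by (simp only: lorentzian_def minkowski_matrix_def vec_eq_iff vec_lambda_beta) blast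

lemma lorentzian_symmetric: "lorentzian g \<Longrightarrow> transpose g = g"
  by (simp add: lorentzian_iff_congruent_minkowski)

lemma lorentzian_minkowski_coordinates:
  fixes g :: "real^'n^'n"
  assumes "lorentzian g"
  obtains P :: "real^'n^'n" and i0
  where "invertible P" and "transpose P ** g ** P = minkowski_matrix i0"
  using assms by (auto simp: lorentzian_iff_congruent_minkowski)

lemma lorentzian_invertible:
  fixes g :: "real^'n^'n"
  assumes "lorentzian g"
  shows "invertible g"
proof -
  obtain P :: "real^'n^'n" and i0 where "transpose P ** g ** P = minkowski_matrix i0"
    using assms by (rule lorentzian_minkowski_coordinates)
  then have "det (transpose P) * det g * det P \<noteq> 0"
    using minkowski_matrix_involution[of i0] by (metis det_mul det_I mult_zero_right one_neq_zero)
  then show ?thesis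
    by (simp add: invertible_det_nz)
qed

lemma lorentzian_matrix_inv:
  fixes g :: "real^'n^'n"
  assumes "lorentzian g"
  shows "lorentzian (matrix_inv g)"
proof -
  have inv: "invertible g" and sym: "transpose g = g"
    using assms by (simp_all add: lorentzian_invertible lorentzian_symmetric)
  obtain P :: "real^'n^'n" and i0
    where P: "invertible P" and E: "transpose P ** g ** P = minkowski_matrix i0"
    using assms by (rule lorentzian_minkowski_coordinates)
  have "transpose (g ** P) ** matrix_inv g ** (g ** P)
      = transpose P ** (g ** matrix_inv g) ** g ** P"
    by (simp add: matrix_transpose_mul sym matrix_mul_assoc)
  then have "transpose (g ** P) ** matrix_inv g ** (g ** P) = minkowski_matrix i0"
    using E matrix_inv_right[OF inv] by simp
  moreover have "invertible (g ** P)"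
    using inv P by (rule invertible_mult)
  ultimately show ?thesis
    using matrix_inv_symmetric[OF inv sym] by (auto simp: lorentzian_iff_congruent_minkowski)
qed

lemma null_cov_iff_null_vec_matrix_inv: "null_cov g w \<longleftrightarrow> null_vec (matrix_inv g) w"
  by (simp add: null_cov_def null_vec_def gcov_def gvec_def)

lemma lorentzian_null_orthogonal_parallel:
  fixes h :: "real^'n^'n"
  assumes "lorentzian h" and "null_vec h u" and "gvec h w w = 0" and "gvec h u w = 0"
  shows "\<exists>c. w = c *\<^sub>R u"
proof -
  obtain P :: "real^'n^'n" and i0
    where P: "invertible P" and E: "transpose P ** h ** P = minkowski_matrix i0"
    using assms(1) by (rule lorentzian_minkowski_coordinates)
  obtain a b where u: "u = P *v a" and w: "w = P *v b"
    using invertible_mult_vec_surj[OF P] by metis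
  have "a \<noteq> 0"
    using \<open>null_vec h u\<close> u by (auto simp: null_vec_def)
  moreover have "a \<bullet> (minkowski_matrix i0 *v a) = 0" "b \<bullet> (minkowski_matrix i0 *v b) = 0"
      "a \<bullet> (minkowski_matrix i0 *v b) = 0"
    using assms(2-4) by (simp_all add: null_vec_def gvec_def u w quadratic_form_congruence E)
  ultimately obtain c where "b = c *\<^sub>R a"
    using minkowski_null_orthogonal_parallel by blast
  then have "w = c *\<^sub>R u"
    by (simp add: u w matrix_vector_mult_scaleR)
  then show ?thesis ..
qed

lemma lorentzian_null_quadratic_form:
  fixes h A :: "real^'n^'n"
  assumes "lorentzian h" and sym: "transpose A = A"
    and null: "\<And>x. gvec h x x = 0 \<Longrightarrow> x \<bullet> (A *v x) = 0"
  shows "\<exists>l. A = l *\<^sub>R h"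
proof -
  obtain P :: "real^'n^'n" and i0
    where P: "invertible P" and E: "transpose P ** h ** P = minkowski_matrix i0"
    using assms(1) by (rule lorentzian_minkowski_coordinates)
  define B where "B = transpose P ** A ** P"
  have "transpose B = B"
    by (simp add: B_def matrix_transpose_mul sym matrix_mul_assoc)
  moreover have "y \<bullet> (B *v y) = 0" if "y \<bullet> (minkowski_matrix i0 *v y) = 0" for y
    using null[of "P *v y"] that by (simp add: gvec_def quadratic_form_congruence E B_def)
  ultimately have "B = B$i0$i0 *\<^sub>R minkowski_matrix i0"
    by (rule minkowski_null_quadratic_form)
  then have "transpose P ** A ** P = transpose P ** (B$i0$i0 *\<^sub>R h) ** P"
    by (simp add: B_def E[symmetric] matrix_scalar_ac scalar_matrix_assoc)
  then have "A = B$i0$i0 *\<^sub>R h"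
    by (rule congruence_cancel[OF P])
  then show ?thesis ..
qed

lemma lorentzian_exists_null:
  fixes h :: "real^'n^'n"
  assumes "CARD('n) \<ge> 2" and "lorentzian h"
  obtains k where "null_vec h k"
proof -
  obtain P :: "real^'n^'n" and i0
    where P: "invertible P" and E: "transpose P ** h ** P = minkowski_matrix i0"
    using assms(2) by (rule lorentzian_minkowski_coordinates)
  have "(UNIV :: 'n set) \<noteq> {i0}"
  proof
    assume "(UNIV :: 'n set) = {i0}"
    then have "CARD('n) = card {i0}"
      by (rule arg_cong)
    with assms(1) show False
      by simp
  qed
  then obtain j :: 'n where "j \<noteq> i0"
    by auto
  define y where "y = axis i0 1 + axis j (1::real)"
  have "y $ i0 = 1"
    using \<open>j \<noteq> i0\<close> by (simp add: y_def axis_def)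
  moreover have "y \<bullet> y = 2"
    using \<open>j \<noteq> i0\<close> by (simp add: y_def inner_add_left inner_add_right inner_axis_axis)
  ultimately
  have "y \<noteq> 0" and "y \<bullet> (minkowski_matrix i0 *v y) = 0"
    by (auto simp: minkowski_form)
  then have "null_vec h (P *v y)"
    by (simp add: null_vec_def gvec_def quadratic_form_congruence E invertible_mult_vec_eq_0[OF P])
  then show ?thesis ..
qed

lemma lorentzian_null_future_sign:
  fixes g :: "real^'n^'n"
  assumes "lorentzian g" and "null_vec g a" and "gvec g tau tau > 0" and "causal_future g tau u"
  shows "gvec g a tau \<noteq> 0 \<and> 0 \<le> gvec g a tau * gvec g a u"
proof -
  obtain P :: "real^'n^'n" and i0
    where P: "invertible P" and E: "transpose P ** g ** P = minkowski_matrix i0"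
    using assms(1) by (rule lorentzian_minkowski_coordinates)
  have coord: "gvec g (P *v x) (P *v y) = 2 * x$i0 * y$i0 - x \<bullet> y" for x y
    by (simp add: gvec_def quadratic_form_congruence E minkowski_form)
  obtain b t m where a: "a = P *v b" and tau: "tau = P *v t" and u: "u = P *v m"
    using invertible_mult_vec_surj[OF P] by metis
  have b: "b \<noteq> 0" "b \<bullet> b \<le> 2 * (b$i0)^2"
    using assms(2)
    by (auto simp: null_vec_def a coord invertible_mult_vec_eq_0[OF P] power2_eq_square)
  have t: "t \<bullet> t < 2 * (t$i0)^2"
    using assms(3) by (simp add: tau coord power2_eq_square)
  have m: "m \<noteq> 0" "m \<bullet> m \<le> 2 * (m$i0)^2" "0 < 2 * t$i0 * m$i0 - t \<bullet> m"
    using assms(4) by (auto simp: causal_future_def u tau coord invertible_mult_vec_eq_0[OF P]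
        power2_eq_square)
  define X where "X = 2 * t$i0 * b$i0 - t \<bullet> b"
  define Y where "Y = 2 * b$i0 * m$i0 - b \<bullet> m"
  have tm: "0 < t$i0 * m$i0"
    using minkowski_causal_time_product(2)[OF less_imp_le[OF t] m(2) t m(1)] m(3)
    by (simp add: zero_less_mult_iff)
  have tb: "0 < t$i0 * b$i0 * X"
    unfolding X_def using minkowski_causal_time_product(2)[OF less_imp_le[OF t] b(2) t b(1)] .
  have bm: "0 \<le> b$i0 * m$i0 * Y"
    unfolding Y_def using minkowski_causal_time_product(1)[OF b(2) m(2)] .
  have "b$i0 \<noteq> 0"
    using tb by auto
  then have bb: "0 < b$i0 * b$i0"
    by (metis not_real_square_gt_zero)
  have "0 \<le> (t$i0 * m$i0) * (b$i0 * b$i0) * (X * Y)"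
    using mult_nonneg_nonneg[OF less_imp_le[OF tb] bm] by (simp add: algebra_simps)
  then have "0 \<le> X * Y"
    using mult_pos_pos[OF tm bb] by (simp add: zero_le_mult_iff)
  moreover have "gvec g a tau = X" and "gvec g a u = Y"
    by (simp_all add: a tau u coord X_def Y_def inner_commute algebra_simps)
  ultimately show ?thesis
    using tb by auto
qed

lemma null_cov_future_sign:
  fixes g :: "real^'n^'n"
  assumes "lorentzian g" and "null_cov g n" and "gvec g tau tau > 0" and "causal_future g tau u"
  shows "n \<bullet> tau \<noteq> 0 \<and> 0 \<le> (n \<bullet> tau) * (n \<bullet> u)"
proof -
  define a where "a = matrix_inv g *v n"
  have ga: "g *v a = n"
    using matrix_inv_right[OF lorentzian_invertible[OF assms(1)]]
    by (simp add: a_def matrix_vector_mul_assoc)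
  have raise: "gvec g a x = n \<bullet> x" for x
    using gvec_commute[OF lorentzian_symmetric[OF assms(1)], of a x]
    by (simp add: gvec_def ga inner_commute)
  have "null_vec g a"
    using assms(2) ga raise[of a]
    by (auto simp: null_vec_def null_cov_def gcov_def a_def inner_commute)
  from lorentzian_null_future_sign[OF assms(1) this assms(3,4)] show ?thesis
    by (simp add: raise)
qed

section \<open>Null-cone preserving tensors\<close>

lemma outer_row: "outer s k $ i = s$i *\<^sub>R k"
  by (simp add: outer_def vec_eq_iff)

lemma transpose_outer: "transpose (outer s k) = outer k s"
  by (simp add: outer_def transpose_def vec_eq_iff)

lemma outer_mult_vec: "outer s k *v v = (k \<bullet> v) *\<^sub>R s"
  by (simp add: outer_def vec_eq_iff matrix_vector_mult_def inner_vec_def sum_distrib_left ac_simps)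

lemma outer_self_eq_0_iff: "outer s s = 0 \<longleftrightarrow> s = 0"
  by (auto simp: outer_def vec_eq_iff)

lemma outer_gram: "outer s k ** h ** transpose (outer s k) = gvec h k k *\<^sub>R outer s s"
  by (simp add: vec_eq_iff matrix_mult_transpose_nth outer_row matrix_vector_mult_scaleR gvec_def)

lemma gram_eq_0_iff_outer_null:
  fixes h T :: "real^'n^'n"
  assumes "CARD('n) \<ge> 2" and "lorentzian h"
  shows "T ** h ** transpose T = 0 \<longleftrightarrow> (\<exists>s k. null_vec h k \<and> T = outer s k)"
proof
  assume "T ** h ** transpose T = 0"
  then have rows: "gvec h (T$i) (T$j) = 0" for i j
    by (metis gvec_def matrix_mult_transpose_nth zero_index)
  show "\<exists>s k. null_vec h k \<and> T = outer s k"
  proof (cases "T = 0")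
    case True
    obtain k where "null_vec h k"
      using lorentzian_exists_null[OF assms] .
    moreover have "T = outer 0 k"
      using True by (simp add: outer_def vec_eq_iff)
    ultimately show ?thesis
      by blast
  next
    case False
    then obtain i where "T$i \<noteq> 0"
      by (auto simp: vec_eq_iff)
    then have null: "null_vec h (T$i)"
      using rows by (simp add: null_vec_def)
    define c where "c j = (SOME c. T$j = c *\<^sub>R T$i)" for j
    have parallel: "T$j = c j *\<^sub>R T$i" for j
      unfolding c_def using lorentzian_null_orthogonal_parallel[OF assms(2) null rows rows]
      by (rule someI_ex)
    have "T = outer (\<chi> j. c j) (T$i)"
      unfolding vec_eq_iff[of T] outer_row vec_lambda_beta using parallel by blast
    with null show ?thesis
      by blast
  qed
next
  assume "\<exists>s k. null_vec h k \<and> T = outer s k"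
  then show "T ** h ** transpose T = 0"
    by (auto simp: outer_gram null_vec_def)
qed

lemma gram_both_eq_0_iff_outer_null_null:
  fixes h T :: "real^'n^'n"
  assumes "CARD('n) \<ge> 2" and "lorentzian h"
  shows "(T ** h ** transpose T = 0 \<and> transpose T ** h ** T = 0) \<longleftrightarrow>
    T = 0 \<or> (\<exists>n k. null_vec h n \<and> null_vec h k \<and> T = outer n k)"
proof
  assume grams: "T ** h ** transpose T = 0 \<and> transpose T ** h ** T = 0"
  then obtain s k where k: "null_vec h k" and T: "T = outer s k"
    using gram_eq_0_iff_outer_null[OF assms] by blast
  have "gvec h s s *\<^sub>R outer k k = 0"
    using grams by (simp add: T transpose_outer outer_gram[of k s h, unfolded transpose_outer])
  then have "gvec h s s = 0"
    using k by (simp add: outer_self_eq_0_iff null_vec_def)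
  show "T = 0 \<or> (\<exists>n k. null_vec h n \<and> null_vec h k \<and> T = outer n k)"
  proof (cases "s = 0")
    case True
    then show ?thesis
      by (simp add: T outer_def vec_eq_iff)
  next
    case False
    with \<open>gvec h s s = 0\<close> have "null_vec h s"
      by (simp add: null_vec_def)
    with k T show ?thesis
      by blast
  qed
next
  assume "T = 0 \<or> (\<exists>n k. null_vec h n \<and> null_vec h k \<and> T = outer n k)"
  then consider "T = 0" | n k where "null_vec h n" "null_vec h k" "T = outer n k"
    by blast
  then show "T ** h ** transpose T = 0 \<and> transpose T ** h ** T = 0"
  proof cases
    case 1
    then show ?thesis
      by (simp add: matrix_matrix_mult_def vec_eq_iff transpose_def)
  next
    case (2 n k)
    then show ?thesis
      by (simp add: outer_gram[of n k h, unfolded transpose_outer]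
          outer_gram[of k n h, unfolded transpose_outer] transpose_outer null_vec_def)
  qed
qed

lemma lorentzian_null_form_singular_eq_0:
  fixes g A :: "real^'n^'n"
  assumes "lorentzian g" and "transpose A = A" and "det A = 0"
    and "\<And>k. gvec g k k = 0 \<Longrightarrow> k \<bullet> (A *v k) = 0"
  shows "A = 0"
proof -
  obtain l where A: "A = l *\<^sub>R g"
    using lorentzian_null_quadratic_form[OF assms(1,2)] assms(4) by blast
  have "\<not> invertible A"
    using assms(3) by (simp add: invertible_det_nz)
  then have "l = 0"
    using A scalar_invertible lorentzian_invertible[OF assms(1)] by blast
  then show ?thesis
    by (simp add: A)
qed

lemma gram_eq_0_iff_singular_null_form:
  fixes g T :: "real^'n^'n"
  assumes "lorentzian g"
  shows "T ** matrix_inv g ** transpose T = 0 \<longleftrightarrow>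
    det T = 0 \<and> (\<forall>k. gvec g k k = 0 \<longrightarrow> k \<bullet> ((T ** matrix_inv g ** transpose T) *v k) = 0)"
proof -
  let ?A = "T ** matrix_inv g ** transpose T"
  have inv: "invertible (matrix_inv g)"
    by (rule invertible_matrix_inv[OF lorentzian_invertible[OF assms]])
  have det: "det ?A = det T * det (matrix_inv g) * det T"
    by (simp add: det_mul det_transpose)
  have sym: "transpose ?A = ?A"
    using lorentzian_symmetric[OF lorentzian_matrix_inv[OF assms]]
    by (simp add: matrix_transpose_mul matrix_mul_assoc)
  show ?thesis
  proof
    assume "?A = 0"
    then show "det T = 0 \<and> (\<forall>k. gvec g k k = 0 \<longrightarrow> k \<bullet> (?A *v k) = 0)"
      using det inv by (simp add: invertible_det_nz det_0[unfolded mat_0])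
  next
    assume "det T = 0 \<and> (\<forall>k. gvec g k k = 0 \<longrightarrow> k \<bullet> (?A *v k) = 0)"
    then show "?A = 0"
      using lorentzian_null_form_singular_eq_0[OF assms sym] det by simp
  qed
qed

lemma singular_map_iff_det:
  fixes g T :: "real^'n^'n"
  assumes "invertible g"
  shows "singular_map g T \<longleftrightarrow> det T = 0"
  using invertible_matrix_inv[OF assms]
  by (simp add: singular_map_def mixed_def det_mul invertible_det_nz)

lemma gvec_vector_mult_mixed:
  fixes g T :: "real^'n^'n"
  assumes "lorentzian g"
  shows "gvec g (k v* mixed g T) (k v* mixed g T) = k \<bullet> ((T ** matrix_inv g ** transpose T) *v k)"
proof -
  let ?G = "matrix_inv g"
  have G: "transpose ?G = ?G" "g ** ?G = mat 1"
    using lorentzian_symmetric[OF lorentzian_matrix_inv[OF assms]]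
      matrix_inv_right[OF lorentzian_invertible[OF assms]] by auto
  have "k v* mixed g T = ?G *v (k v* T)"
    by (simp add: mixed_def G(1) matrix_transpose_mul matrix_vector_mul_assoc
        flip: transpose_matrix_vector)
  then have "gvec g (k v* mixed g T) (k v* mixed g T) = (k v* T) \<bullet> (?G *v (k v* T))"
    by (simp add: gvec_def matrix_vector_mul_assoc G(2) inner_commute)
  then show ?thesis
    using quadratic_form_congruence[of "transpose T" k "matrix_inv g" k] by simp
qed

lemma gcov_mixed_mult_vec:
  fixes g T :: "real^'n^'n"
  assumes "invertible g"
  shows "gcov g (mixed g T *v (g *v k)) (mixed g T *v (g *v k))
    = k \<bullet> ((transpose T ** matrix_inv g ** T) *v k)"
proof -
  have "mixed g T *v (g *v k) = T *v k"
    using matrix_inv_left[OF assms]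
    by (simp add: mixed_def matrix_vector_mul_assoc flip: matrix_mul_assoc)
  then show ?thesis
    by (simp add: gcov_def quadratic_form_congruence)
qed

lemma all_null_vec_iff_all_isotropic:
  "P 0 \<Longrightarrow> (\<forall>k. null_vec g k \<longrightarrow> P k) \<longleftrightarrow> (\<forall>k. gvec g k k = 0 \<longrightarrow> P k)"
  by (metis null_vec_def)

lemma zero_or_null_vec_iff: "v = 0 \<or> null_vec g v \<longleftrightarrow> gvec g v v = 0"
  by (auto simp: null_vec_def gvec_def)

lemma zero_or_null_cov_iff: "w = 0 \<or> null_cov g w \<longleftrightarrow> gcov g w w = 0"
  by (auto simp: null_cov_def gcov_def)

lemma null_cone_preserving_iff_null_form:
  fixes g T :: "real^'n^'n"
  assumes "lorentzian g"
  shows "null_cone_preserving g T \<longleftrightarrow>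
    (\<forall>k. gvec g k k = 0 \<longrightarrow> k \<bullet> ((T ** matrix_inv g ** transpose T) *v k) = 0)"
  unfolding null_cone_preserving_def Let_def zero_or_null_vec_iff gvec_vector_mult_mixed[OF assms]
  by (rule all_null_vec_iff_all_isotropic) simp

lemma null_cone_bi_preserving_iff_null_forms:
  fixes g T :: "real^'n^'n"
  assumes "lorentzian g"
  shows "null_cone_bi_preserving g T \<longleftrightarrow>
    (\<forall>k. gvec g k k = 0 \<longrightarrow> k \<bullet> ((T ** matrix_inv g ** transpose T) *v k) = 0) \<and>
    (\<forall>k. gvec g k k = 0 \<longrightarrow> k \<bullet> ((transpose T ** matrix_inv g ** T) *v k) = 0)"
  unfolding null_cone_bi_preserving_def null_cone_preserving_iff_null_form[OF assms] Let_def
    zero_or_null_cov_iff gcov_mixed_mult_vec[OF lorentzian_invertible[OF assms]]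
  using all_null_vec_iff_all_isotropic[of "\<lambda>k. k \<bullet> ((transpose T ** matrix_inv g ** T) *v k) = 0" g]
  by simp

lemma outer_null_null_DP_or_neg_DP:
  fixes g :: "real^'n^'n"
  assumes "lorentzian g" and "gvec g tau tau > 0" and "null_cov g n" and "null_cov g k"
  shows "outer n k \<in> DP g tau \<or> - outer n k \<in> DP g tau"
proof -
  have "causal_future g tau tau"
    using assms(2) by (auto simp: causal_future_def gvec_def)
  then have "n \<bullet> tau \<noteq> 0" and "k \<bullet> tau \<noteq> 0"
    using null_cov_future_sign[OF assms(1) assms(3) assms(2)]
      null_cov_future_sign[OF assms(1) assms(4) assms(2)] by auto
  then have \<sigma>: "(n \<bullet> tau) * (k \<bullet> tau) \<noteq> 0"
    by simp
  have pairing: "u \<bullet> (outer n k *v v) = (n \<bullet> u) * (k \<bullet> v)" for u v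
    by (simp add: outer_mult_vec inner_commute mult.commute)
  have sign: "0 \<le> ((n \<bullet> tau) * (k \<bullet> tau)) * ((n \<bullet> u) * (k \<bullet> v))"
    if "causal_future g tau u" "causal_future g tau v" for u v
    using mult_nonneg_nonneg[OF null_cov_future_sign[OF assms(1,3,2) that(1), THEN conjunct2]
        null_cov_future_sign[OF assms(1,4,2) that(2), THEN conjunct2]]
    by (simp add: algebra_simps)
  show ?thesis
  proof (cases "0 < (n \<bullet> tau) * (k \<bullet> tau)")
    case True
    have "0 \<le> u \<bullet> (outer n k *v v)"
      if "causal_future g tau u" "causal_future g tau v" for u v
      using sign[OF that] True zero_le_mult_iff[of "(n \<bullet> tau) * (k \<bullet> tau)"]
      by (simp add: pairing)
    then show ?thesis
      by (simp add: DP_def)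
  next
    case False
    with \<sigma> have neg: "(n \<bullet> tau) * (k \<bullet> tau) < 0"
      by linarith
    have "0 \<le> u \<bullet> (outer (- n) k *v v)"
      if "causal_future g tau u" "causal_future g tau v" for u v
    proof -
      have "(n \<bullet> u) * (k \<bullet> v) \<le> 0"
        using sign[OF that] neg
          zero_le_mult_iff[of "(n \<bullet> tau) * (k \<bullet> tau)" "(n \<bullet> u) * (k \<bullet> v)"]
        by linarith
      then show ?thesis
        by (simp add: outer_mult_vec inner_commute mult.commute)
    qed
    moreover have "outer (- n) k = - outer n k"
      by (simp add: outer_def vec_eq_iff)
    ultimately show ?thesis
      by (simp add: DP_def)
  qed
qed

theorem mainTheorem11:
  fixes g T :: "real^'n^'n" and tau :: "real^'n"
  assumes dim: "CARD('n) \<ge> 3"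
    and lor: "lorentzian g"
    and tau: "gvec g tau tau > 0"
  shows
    "((T ** matrix_inv g ** transpose T = 0)
        \<longleftrightarrow> (singular_map g T \<and> null_cone_preserving g T))
     \<and> ((T ** matrix_inv g ** transpose T = 0)
        \<longleftrightarrow> (\<exists>s k. null_cov g k \<and> T = outer s k))
     \<and> ((T ** matrix_inv g ** transpose T = 0 \<and> transpose T ** matrix_inv g ** T = 0)
        \<longleftrightarrow> (singular_map g T \<and> null_cone_bi_preserving g T))
     \<and> ((T ** matrix_inv g ** transpose T = 0 \<and> transpose T ** matrix_inv g ** T = 0)
        \<longleftrightarrow> (T = 0 \<or> (\<exists>n k. null_cov g n \<and> null_cov g k \<and> T = outer n k)))
     \<and> ((T ** matrix_inv g ** transpose T = 0 \<and> transpose T ** matrix_inv g ** T = 0)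
        \<longrightarrow> (T \<in> DP g tau \<or> - T \<in> DP g tau))"
proof -
  have dim2: "CARD('n) \<ge> 2"
    using dim by simp
  have inv_lor: "lorentzian (matrix_inv g)"
    using lor by (rule lorentzian_matrix_inv)
  have singular: "singular_map g T \<longleftrightarrow> det T = 0"
    using lorentzian_invertible[OF lor] by (rule singular_map_iff_det)
  note gram = gram_eq_0_iff_singular_null_form[OF lor]
  have preserving:
    "T ** matrix_inv g ** transpose T = 0 \<longleftrightarrow> singular_map g T \<and> null_cone_preserving g T"
    by (simp add: gram singular null_cone_preserving_iff_null_form[OF lor])
  have rank_one: "T ** matrix_inv g ** transpose T = 0 \<longleftrightarrow> (\<exists>s k. null_cov g k \<and> T = outer s k)"
    unfolding null_cov_iff_null_vec_matrix_inv by (rule gram_eq_0_iff_outer_null[OF dim2 inv_lor])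
  have bi_preserving:
    "T ** matrix_inv g ** transpose T = 0 \<and> transpose T ** matrix_inv g ** T = 0
      \<longleftrightarrow> singular_map g T \<and> null_cone_bi_preserving g T"
    using gram[of "transpose T"]
    by (auto simp: gram singular null_cone_bi_preserving_iff_null_forms[OF lor] det_transpose)
  have null_null:
    "T ** matrix_inv g ** transpose T = 0 \<and> transpose T ** matrix_inv g ** T = 0
      \<longleftrightarrow> T = 0 \<or> (\<exists>n k. null_cov g n \<and> null_cov g k \<and> T = outer n k)"
    unfolding null_cov_iff_null_vec_matrix_inv
    by (rule gram_both_eq_0_iff_outer_null_null[OF dim2 inv_lor])
  have "T ** matrix_inv g ** transpose T = 0 \<and> transpose T ** matrix_inv g ** T = 0
      \<longrightarrow> T \<in> DP g tau \<or> - T \<in> DP g tau"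
    using null_null outer_null_null_DP_or_neg_DP[OF lor tau] by (auto simp: DP_def)
  with preserving rank_one bi_preserving null_null show ?thesis
    by blast
qed

end
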